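(* Let $M\in S_d^+$ with $\det M=1$. Then for any $u\in\mathbb R^d$ with $|u|=1$ and any $\delta>0$, $$\mathcal P(\|Ru\|_M\le\delta)\le C(d)\,\delta^{d-1}\,\nu_1(M),$$ where $C(d)=2^d/\omega_d$ and $\omega_d$ is the volume of the $d$-dimensional Euclidean unit ball.
   Context: $S_d^+$ is the set of $d\times d$ symmetric positive definite matrices; $\|x\|_M:=\sqrt{x^TMx}$, and $|x|$ is the Euclidean norm. $\nu_1(M)$ denotes the square root of the smallest eigenvalue of $M$, i.e. $\nu_1(M)=\|M^{-1}\|^{-1/2}$. $R$ is a random matrix in the orthogonal group $\mathcal O_d$ distributed according to the Haar probability measure, and $\mathcal P$ denotes probability. *)

theory Defs
  imports "HOL-Analysis.Analysis" "HOL-Probability.Probability"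
begin

definition pos_def_sym :: "real^'n^'n \<Rightarrow> bool" where
  "pos_def_sym M \<longleftrightarrow> transpose M = M \<and> (\<forall>x. x \<noteq> 0 \<longrightarrow> x \<bullet> (M *v x) > 0)"

definition M_norm :: "real^'n^'n \<Rightarrow> real^'n \<Rightarrow> real" where
  "M_norm M x = sqrt (x \<bullet> (M *v x))"

definition nu1 :: "real^'n^'n \<Rightarrow> real" where
  "nu1 M = sqrt (Inf {l. \<exists>v. v \<noteq> 0 \<and> M *v v = l *\<^sub>R v})"

text \<open>Haar probability measure on the orthogonal group O_d, viewed as a
  Borel probability measure on d x d matrices concentrated on the orthogonal
  matrices and invariant under left multiplication by orthogonal matrices.\<close>
definition haar_orthogonal :: "(real^'n^'n) measure \<Rightarrow> bool" where
  "haar_orthogonal \<mu> \<longleftrightarrow>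
     prob_space \<mu> \<and> sets \<mu> = sets borel \<and>
     (AE R in \<mu>. orthogonal_matrix R) \<and>
     (\<forall>Q. orthogonal_matrix Q \<longrightarrow> distr \<mu> borel (\<lambda>R. Q ** R) = \<mu>)"

definition omega :: "'n::finite itself \<Rightarrow> real" where
  "omega _ = measure lborel (ball (0::real^'n) 1)"

end

theory Submission
  imports Defs
begin

(*
  Let C be the cone of vectors y with |y|_M <= delta |y|.  Fubini on O(d) x B, with B the unit
  ball, gives  P(Ru in C) * omega_d = vol(B \<inter> C):  by left and right invariance of the Haar
  measure the law of Rv is the same for every unit vector v, and Lebesgue measure is rotation
  invariant.  Diagonalising M = P diag(lambda) P^T, the set B \<inter> C lies in the rotated box
  P[-b, b] with b_i = min 1 (delta / sqrt lambda_i), whose volume 2^d prod b_i is at most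
  2^d delta^(d-1) sqrt lambda_min = 2^d delta^(d-1) nu_1(M) because prod lambda_i = det M = 1.
*)

lemma orthogonal_transformation_matrix_vector_mult_iff:
  "orthogonal_transformation ((*v) (A::real^'n^'n)) \<longleftrightarrow> orthogonal_matrix A"
  by (simp add: orthogonal_transformation_matrix)

lemma orthogonal_matrix_inner:
  fixes A :: "real^'n^'n"
  assumes "orthogonal_matrix A"
  shows "(A *v x) \<bullet> (A *v y) = x \<bullet> y"
  using assms by (simp add: orthogonal_transformation_def flip: orthogonal_transformation_matrix_vector_mult_iff)

lemma orthogonal_matrix_norm:
  fixes A :: "real^'n^'n"
  assumes "orthogonal_matrix A"
  shows "norm (A *v x) = norm x"
  using assms by (simp add: norm_eq_sqrt_inner orthogonal_matrix_inner)

lemma orthogonal_matrix_vector_mult_transpose: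
  fixes A :: "real^'n^'n"
  assumes "orthogonal_matrix A"
  shows "A *v (transpose A *v x) = x" and "transpose A *v (A *v x) = x"
  using assms by (metis matrix_vector_mul_assoc matrix_vector_mul_lid orthogonal_matrix_def)+

lemma orthogonal_matrix_vimage_eq_image:
  fixes R :: "real^'n^'n"
  assumes R: "orthogonal_matrix R"
  shows "(*v) R -` K = (*v) (transpose R) ` K"
proof (intro set_eqI iffI)
  fix x
  assume "x \<in> (*v) R -` K"
  then show "x \<in> (*v) (transpose R) ` K"
    using orthogonal_matrix_vector_mult_transpose(2)[OF R, of x] by (metis image_eqI vimageD)
next
  fix x
  assume "x \<in> (*v) (transpose R) ` K"
  then obtain k where "k \<in> K" "x = transpose R *v k"
    by blast
  then show "x \<in> (*v) R -` K"
    using orthogonal_matrix_vector_mult_transpose(1)[OF R, of k] by simp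
qed

lemma orthogonal_matrix_column_nonzero:
  fixes P :: "real^'n^'n"
  shows "orthogonal_matrix P \<Longrightarrow> column k P \<noteq> 0"
  unfolding orthogonal_matrix_orthonormal_columns by (metis norm_zero zero_neq_one)

lemma symmetric_matrix_inner_commute:
  fixes M :: "real^'n^'n"
  assumes "transpose M = M"
  shows "(M *v x) \<bullet> y = x \<bullet> (M *v y)"
  by (metis assms dot_lmul_matrix vector_transpose_matrix)

lemma continuous_on_matrix_matrix_mult [continuous_intros]:
  fixes f g :: "'a::topological_space \<Rightarrow> real^'n^'n"
  shows "continuous_on S f \<Longrightarrow> continuous_on S g \<Longrightarrow> continuous_on S (\<lambda>x. f x ** g x)"
  unfolding matrix_matrix_mult_def by (intro continuous_intros)

lemma continuous_on_matrix_vector_mult [continuous_intros]: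
  fixes f :: "'a::topological_space \<Rightarrow> real^'n^'m" and g :: "'a \<Rightarrow> real^'n"
  shows "continuous_on S f \<Longrightarrow> continuous_on S g \<Longrightarrow> continuous_on S (\<lambda>x. f x *v g x)"
  unfolding matrix_vector_mult_def by (intro continuous_intros)

lemma continuous_on_transpose [continuous_intros]:
  fixes f :: "'a::topological_space \<Rightarrow> real^'n^'m"
  shows "continuous_on S f \<Longrightarrow> continuous_on S (\<lambda>x. transpose (f x))"
  unfolding transpose_def by (intro continuous_intros)

lemma continuous_vimage_borel:
  fixes f :: "'a::topological_space \<Rightarrow> 'b::topological_space"
  shows "continuous_on UNIV f \<Longrightarrow> A \<in> sets borel \<Longrightarrow> f -` A \<in> sets borel"
  using measurable_sets[OF borel_measurable_continuous_onI, of f A] by simp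

lemma sets_borel_matrix_vector_mult_event:
  fixes C :: "(real^'m) set" and u :: "real^'n"
  shows "C \<in> sets borel \<Longrightarrow> {R :: real^'n^'m. R *v u \<in> C} \<in> sets borel"
  using continuous_vimage_borel[of "\<lambda>R. R *v u" C] by (simp add: vimage_def continuous_intros)

subsection \<open>Spectral theorem for symmetric matrices\<close>

lemma quadratic_nonneg_imp_linear_coeff_zero:
  fixes a b :: real
  assumes "\<And>t. 0 \<le> 2 * t * a + t\<^sup>2 * b"
  shows "a = 0"
proof (rule ccontr)
  assume "a \<noteq> 0"
  define t where "t = - a / (\<bar>b\<bar> + 1)"
  have "0 \<le> (2 * t * a + t\<^sup>2 * b) * (\<bar>b\<bar> + 1)\<^sup>2"
    using assms[of t] by simp
  also have "\<dots> = 2 * a * (t * (\<bar>b\<bar> + 1)) * (\<bar>b\<bar> + 1) + b * (t * (\<bar>b\<bar> + 1))\<^sup>2"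
    by (simp add: power2_eq_square algebra_simps)
  also have "t * (\<bar>b\<bar> + 1) = - a"
    by (simp add: t_def add_pos_nonneg)
  also have "2 * a * (- a) * (\<bar>b\<bar> + 1) + b * (- a)\<^sup>2 = a\<^sup>2 * (b - 2 * (\<bar>b\<bar> + 1))"
    by (simp add: power2_eq_square algebra_simps)
  also have "\<dots> < 0"
    using \<open>a \<noteq> 0\<close> by (intro mult_pos_neg) auto
  finally show False by simp
qed

lemma rayleigh_minimizer_le:
  fixes M :: "real^'n^'n"
  assumes W: "subspace W" and z: "z \<in> W"
    and min: "\<And>w. w \<in> W \<Longrightarrow> norm w = 1 \<Longrightarrow> v \<bullet> (M *v v) \<le> w \<bullet> (M *v w)"
  shows "(v \<bullet> (M *v v)) * (z \<bullet> z) \<le> z \<bullet> (M *v z)"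
proof (cases "z = 0")
  case False
  have "v \<bullet> (M *v v) \<le> (z /\<^sub>R norm z) \<bullet> (M *v (z /\<^sub>R norm z))"
    using False z W by (intro min) (auto simp: subspace_scale)
  also have "\<dots> = (z \<bullet> (M *v z)) / (z \<bullet> z)"
    by (simp add: matrix_vector_mult_scaleR divide_inverse power2_norm_eq_inner[symmetric] power2_eq_square)
  finally show ?thesis
    using False by (simp add: divide_simps)
qed simp

lemma rayleigh_minimizer_is_eigenvector:
  fixes M :: "real^'n^'n"
  assumes sym: "transpose M = M"
    and W: "subspace W" and MW: "\<And>w. w \<in> W \<Longrightarrow> M *v w \<in> W"
    and v: "v \<in> W" "norm v = 1"
    and min: "\<And>w. w \<in> W \<Longrightarrow> norm w = 1 \<Longrightarrow> v \<bullet> (M *v v) \<le> w \<bullet> (M *v w)"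
  shows "M *v v = (v \<bullet> (M *v v)) *\<^sub>R v"
proof -
  define l where "l = v \<bullet> (M *v v)"
  have vv: "v \<bullet> v = 1"
    using v by (simp add: norm_eq_1)
  have ge: "l * (z \<bullet> z) \<le> z \<bullet> (M *v z)" if "z \<in> W" for z
    unfolding l_def using W that min by (rule rayleigh_minimizer_le)
  define r where "r = M *v v - l *\<^sub>R v"
  \<comment> \<open>\<open>r\<close> lies in \<open>W\<close> and, by the first variation of the Rayleigh quotient at \<open>v\<close>, is orthogonal to \<open>W\<close>.\<close>
  have r_orth: "r \<bullet> y = 0" if "y \<in> W" for y
  proof (rule quadratic_nonneg_imp_linear_coeff_zero[where b = "y \<bullet> (M *v y) - l * (y \<bullet> y)"])
    fix t :: real
    have "v + t *\<^sub>R y \<in> W"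
      using W v \<open>y \<in> W\<close> by (simp add: subspace_add subspace_scale)
    then have ge_t: "l * ((v + t *\<^sub>R y) \<bullet> (v + t *\<^sub>R y)) \<le> (v + t *\<^sub>R y) \<bullet> (M *v (v + t *\<^sub>R y))"
      by (rule ge)
    have "v \<bullet> (M *v y) = (M *v v) \<bullet> y"
      using symmetric_matrix_inner_commute[OF sym] by simp
    then have "(v + t *\<^sub>R y) \<bullet> (M *v (v + t *\<^sub>R y)) = l + 2 * t * ((M *v v) \<bullet> y) + t\<^sup>2 * (y \<bullet> (M *v y))"
      by (simp add: l_def matrix_vector_right_distrib matrix_vector_mult_scaleR inner_add_left
          inner_add_right inner_commute[of y "M *v v"] power2_eq_square algebra_simps)
    moreover have "(v + t *\<^sub>R y) \<bullet> (v + t *\<^sub>R y) = 1 + 2 * t * (v \<bullet> y) + t\<^sup>2 * (y \<bullet> y)"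
      by (simp add: vv inner_add_left inner_add_right inner_commute[of y v] power2_eq_square algebra_simps)
    ultimately show "0 \<le> 2 * t * (r \<bullet> y) + t\<^sup>2 * (y \<bullet> (M *v y) - l * (y \<bullet> y))"
      using ge_t by (simp add: r_def inner_diff_left algebra_simps)
  qed
  have "r \<in> W"
    unfolding r_def using W MW v by (simp add: subspace_diff subspace_scale)
  then have "r = 0"
    using r_orth inner_eq_zero_iff by blast
  then show ?thesis
    by (simp add: r_def l_def)
qed

lemma symmetric_matrix_eigenvector_orthogonal_to_eigenvectors:
  fixes M :: "real^'n^'n"
  assumes sym: "transpose M = M"
    and S: "\<And>s. s \<in> S \<Longrightarrow> \<exists>l. M *v s = l *\<^sub>R s"
    and x: "x \<noteq> 0" "\<And>s. s \<in> S \<Longrightarrow> orthogonal s x"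
  obtains v l where "norm v = 1" "\<And>s. s \<in> S \<Longrightarrow> orthogonal s v" "M *v v = l *\<^sub>R v"
proof -
  define W where "W = {y. \<forall>s \<in> S. orthogonal s y}"
  have "subspace W"
    unfolding W_def by (rule subspace_orthogonal_to_vectors)
  have MW: "M *v w \<in> W" if "w \<in> W" for w
  proof -
    have "s \<bullet> (M *v w) = 0" if "s \<in> S" for s
    proof -
      obtain l where "M *v s = l *\<^sub>R s"
        using S \<open>s \<in> S\<close> by blast
      then show ?thesis
        using \<open>w \<in> W\<close> \<open>s \<in> S\<close> symmetric_matrix_inner_commute[OF sym, of s w]
        by (simp add: W_def orthogonal_def)
    qed
    then show ?thesis
      by (simp add: W_def orthogonal_def)
  qed
  define K where "K = sphere 0 1 \<inter> W"
  have "compact K"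
    unfolding K_def by (intro compact_Int_closed compact_sphere closed_subspace \<open>subspace W\<close>)
  moreover have "x /\<^sub>R norm x \<in> K"
    using x \<open>subspace W\<close> by (auto simp: K_def W_def orthogonal_def)
  moreover have "continuous_on K (\<lambda>v. v \<bullet> (M *v v))"
    by (intro continuous_intros)
  ultimately obtain v where "v \<in> K" and min: "\<And>w. w \<in> K \<Longrightarrow> v \<bullet> (M *v v) \<le> w \<bullet> (M *v w)"
    using continuous_attains_inf[of K "\<lambda>v. v \<bullet> (M *v v)"] by blast
  then have "M *v v = (v \<bullet> (M *v v)) *\<^sub>R v"
    using \<open>subspace W\<close> MW by (intro rayleigh_minimizer_is_eigenvector[OF sym]) (auto simp: K_def)
  then show ?thesis
    using that \<open>v \<in> K\<close> by (auto simp: K_def W_def)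
qed

definition orthonormal_eigenvectors :: "real^'n^'n \<Rightarrow> (real^'n) set \<Rightarrow> bool" where
  "orthonormal_eigenvectors M S \<longleftrightarrow>
     (\<forall>v\<in>S. norm v = 1 \<and> (\<exists>l. M *v v = l *\<^sub>R v)) \<and> pairwise orthogonal S"

lemma orthonormal_eigenvectors_finite_card:
  fixes M :: "real^'n^'n"
  assumes "orthonormal_eigenvectors M S"
  shows "independent S" "finite S" "card S \<le> CARD('n)"
proof -
  show "independent S"
    using assms unfolding orthonormal_eigenvectors_def by (intro pairwise_orthogonal_independent) auto
  then show "finite S" "card S \<le> CARD('n)"
    using independent_bound[of S] by auto
qed

lemma symmetric_matrix_orthonormal_eigenvectors_exist:
  fixes M :: "real^'n^'n"
  assumes sym: "transpose M = M"
  obtains S where "orthonormal_eigenvectors M S" "finite S" "card S = CARD('n)"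
proof -
  have "orthonormal_eigenvectors M {}"
    by (simp add: orthonormal_eigenvectors_def)
  moreover have "\<forall>S. orthonormal_eigenvectors M S \<longrightarrow> card S < CARD('n) + 1"
    using orthonormal_eigenvectors_finite_card(3)[of M] by (auto simp: less_Suc_eq_le)
  ultimately obtain S where S: "orthonormal_eigenvectors M S"
    and S_max: "\<And>T. orthonormal_eigenvectors M T \<Longrightarrow> card T \<le> card S"
    using ex_has_greatest_nat[of "orthonormal_eigenvectors M" "{}" card "CARD('n) + 1"] by blast
  note S_fin = orthonormal_eigenvectors_finite_card[OF S]
  have "card S = CARD('n)"
  proof (rule ccontr)
    assume "card S \<noteq> CARD('n)"
    then have "dim S < DIM(real^'n)"
      using S_fin dim_eq_card_independent[of S] by simp
    then obtain x where "x \<noteq> 0" "\<And>y. y \<in> span S \<Longrightarrow> orthogonal x y"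
      using orthogonal_to_subspace_exists[of S] by metis
    then have "x \<noteq> 0" "\<And>s. s \<in> S \<Longrightarrow> orthogonal s x"
      using orthogonal_commute span_base by blast+
    moreover have "\<exists>l. M *v s = l *\<^sub>R s" if "s \<in> S" for s
      using S that by (auto simp: orthonormal_eigenvectors_def)
    ultimately obtain v l where v: "norm v = 1" "\<And>s. s \<in> S \<Longrightarrow> orthogonal s v" "M *v v = l *\<^sub>R v"
      using symmetric_matrix_eigenvector_orthogonal_to_eigenvectors[OF sym, of S x] by blast
    have "v \<notin> S"
      using v(1,2) by (metis orthogonal_self norm_zero zero_neq_one)
    moreover have "orthonormal_eigenvectors M (insert v S)"
      using S v unfolding orthonormal_eigenvectors_def pairwise_insert by (auto simp: orthogonal_commute[of v])
    ultimately show False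
      using S_max[of "insert v S"] S_fin by simp
  qed
  then show ?thesis
    using that S S_fin by blast
qed

lemma symmetric_matrix_orthogonal_eigenbasis:
  fixes M :: "real^'n^'n"
  assumes "transpose M = M"
  obtains P :: "real^'n^'n" and lam :: "'n \<Rightarrow> real"
  where "orthogonal_matrix P" "\<And>k. M *v column k P = lam k *\<^sub>R column k P"
proof -
  obtain S where S: "orthonormal_eigenvectors M S" "finite S" "card S = CARD('n)"
    using symmetric_matrix_orthonormal_eigenvectors_exist[OF assms] .
  then obtain h where "bij_betw h (UNIV::'n set) S"
    using finite_same_card_bij[of "UNIV::'n set" S] by auto
  then have hS: "h k \<in> S" and h_inj: "i \<noteq> k \<Longrightarrow> h i \<noteq> h k" for i k
    by (auto simp: bij_betw_def inj_on_def)
  define P :: "real^'n^'n" where "P = (\<chi> i k. h k $ i)"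
  have col: "column k P = h k" for k
    by (simp add: P_def column_def vec_eq_iff)
  have "orthogonal_matrix P"
    unfolding orthogonal_matrix_orthonormal_columns col
    using S(1) hS h_inj by (simp add: orthonormal_eigenvectors_def pairwise_def)
  moreover have "\<forall>k. \<exists>l. M *v h k = l *\<^sub>R h k"
    using S(1) hS by (auto simp: orthonormal_eigenvectors_def)
  then obtain lam where "\<And>k. M *v h k = lam k *\<^sub>R h k"
    by metis
  ultimately show ?thesis
    using that col by metis
qed

definition diag_mat :: "('n \<Rightarrow> real) \<Rightarrow> real^'n^'n" where
  "diag_mat lam = (\<chi> i j. if i = j then lam i else 0)"

lemma diag_mat_vector_mult: "diag_mat lam *v w = (\<chi> i. lam i * w $ i)"
  by (simp add: diag_mat_def matrix_vector_mult_def vec_eq_iff if_distrib[of "\<lambda>x. x * _"] sum.delta' cong: if_cong)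

lemma det_diag_mat: "det (diag_mat lam) = prod lam UNIV"
  by (subst det_diagonal) (auto simp: diag_mat_def)

lemma eigenbasis_diagonalizes:
  fixes M P :: "real^'n^'n"
  assumes P: "orthogonal_matrix P" and eig: "\<And>k. M *v column k P = lam k *\<^sub>R column k P"
  shows "transpose P ** M ** P = diag_mat lam"
proof -
  have "(M ** P) $ i $ k = (P ** diag_mat lam) $ i $ k" for i k
  proof -
    have "(M ** P) $ i $ k = (M *v column k P) $ i"
      by (simp add: matrix_matrix_mult_def matrix_vector_mult_def column_def)
    also have "\<dots> = lam k * P $ i $ k"
      by (simp only: eig) (simp add: column_def)
    also have "\<dots> = (P ** diag_mat lam) $ i $ k"
      by (simp add: matrix_matrix_mult_def diag_mat_def if_distrib[of "\<lambda>x. _ * x"] sum.delta cong: if_cong)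
    finally show ?thesis .
  qed
  then have "M ** P = P ** diag_mat lam"
    by (simp add: vec_eq_iff)
  then have "transpose P ** M ** P = (transpose P ** P) ** diag_mat lam"
    by (metis matrix_mul_assoc)
  then show ?thesis
    using P by (simp add: orthogonal_matrix_def)
qed

lemma eigenbasis_quadratic_form:
  fixes M P :: "real^'n^'n"
  assumes P: "orthogonal_matrix P" and eig: "\<And>k. M *v column k P = lam k *\<^sub>R column k P"
  shows "(P *v w) \<bullet> (M *v (P *v w)) = (\<Sum>i\<in>UNIV. lam i * (w $ i)\<^sup>2)"
proof -
  have "(P *v w) \<bullet> (M *v (P *v w)) = w \<bullet> ((transpose P ** M ** P) *v w)"
    by (metis dot_lmul_matrix matrix_vector_mul_assoc vector_transpose_matrix)
  also have "\<dots> = (\<Sum>i\<in>UNIV. lam i * (w $ i)\<^sup>2)"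
    by (simp add: eigenbasis_diagonalizes[OF P eig] diag_mat_vector_mult inner_vec_def
        power2_eq_square algebra_simps)
  finally show ?thesis .
qed

lemma eigenbasis_det:
  fixes M P :: "real^'n^'n"
  assumes P: "orthogonal_matrix P" and eig: "\<And>k. M *v column k P = lam k *\<^sub>R column k P"
  shows "det M = prod lam UNIV"
proof -
  have "det (transpose P) * det M * det P = prod lam UNIV"
    using eigenbasis_diagonalizes[OF P eig] by (metis det_diag_mat det_mul)
  moreover have "det (transpose P) * det P = 1"
    using det_orthogonal_matrix[OF P] by (auto simp: det_transpose)
  ultimately show ?thesis
    by (simp add: algebra_simps)
qed

lemma eigenbasis_nu1:
  fixes M P :: "real^'n^'n"
  assumes P: "orthogonal_matrix P" and eig: "\<And>k. M *v column k P = lam k *\<^sub>R column k P"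
  shows "nu1 M = sqrt (Min (range lam))"
proof -
  have "Inf {l. \<exists>v. v \<noteq> 0 \<and> M *v v = l *\<^sub>R v} = Min (range lam)"
  proof (rule cInf_eq_minimum)
    have "Min (range lam) \<in> range lam"
      by (rule Min_in) auto
    then obtain j where "lam j = Min (range lam)"
      by (metis imageE)
    then show "Min (range lam) \<in> {l. \<exists>v. v \<noteq> 0 \<and> M *v v = l *\<^sub>R v}"
      using eig[of j] orthogonal_matrix_column_nonzero[OF P, of j] by auto
  next
    fix l
    assume "l \<in> {l. \<exists>v. v \<noteq> 0 \<and> M *v v = l *\<^sub>R v}"
    then obtain v where v: "v \<noteq> 0" "M *v v = l *\<^sub>R v"
      by auto
    define w where "w = transpose P *v v"
    have Pw: "P *v w = v"
      unfolding w_def using orthogonal_matrix_vector_mult_transpose(1)[OF P] .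
    have "l * (v \<bullet> v) = (\<Sum>i\<in>UNIV. lam i * (w $ i)\<^sup>2)"
      using eigenbasis_quadratic_form[OF P eig, of w] v by (simp add: Pw)
    also have "\<dots> \<ge> (\<Sum>i\<in>UNIV. Min (range lam) * (w $ i)\<^sup>2)"
      by (intro sum_mono mult_right_mono) auto
    also have "(\<Sum>i\<in>UNIV. Min (range lam) * (w $ i)\<^sup>2) = Min (range lam) * (v \<bullet> v)"
      using orthogonal_matrix_inner[OF P, of w w]
      by (simp add: Pw inner_vec_def sum_distrib_left power2_eq_square)
    finally show "Min (range lam) \<le> l"
      using v by simp
  qed
  then show ?thesis
    by (simp add: nu1_def)
qed

lemma pos_def_sym_eigenvalue_pos:
  fixes M :: "real^'n^'n"
  assumes "pos_def_sym M" "v \<noteq> 0" "M *v v = l *\<^sub>R v"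
  shows "l > 0"
proof -
  have "0 < v \<bullet> (M *v v)"
    using assms unfolding pos_def_sym_def by blast
  also have "\<dots> = l * (v \<bullet> v)"
    using assms by simp
  finally show ?thesis
    using inner_ge_zero[of v] by (auto simp: zero_less_mult_iff)
qed

subsection \<open>Rotation invariance of Lebesgue measure\<close>

lemma sets_lebesgue_open: "open S \<Longrightarrow> S \<in> sets lebesgue"
  by (simp add: borel_open sets_completionI_sets)

lemma Vitali_covering_open_balls:
  fixes S :: "'a::euclidean_space set"
  assumes "open S"
  obtains C :: "('a \<times> real) set"
  where "countable C" "\<And>i. i \<in> C \<Longrightarrow> 0 < snd i \<and> ball (fst i) (snd i) \<subseteq> S"
    "disjoint_family_on (\<lambda>i. ball (fst i) (snd i)) C"
    "negligible (S - (\<Union>i\<in>C. ball (fst i) (snd i)))"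
proof (rule Vitali_covering_theorem_balls[of S "{i. 0 < snd i \<and> ball (fst i) (snd i) \<subseteq> S}" fst snd])
  fix x and d :: real
  assume "x \<in> S" "0 < d"
  then obtain e where "e > 0" "ball x e \<subseteq> S"
    using \<open>open S\<close> open_contains_ball by blast
  then show "\<exists>i. i \<in> {i. 0 < snd i \<and> ball (fst i) (snd i) \<subseteq> S} \<and> x \<in> ball (fst i) (snd i) \<and> snd i < d"
    using \<open>0 < d\<close> by (intro exI[of _ "(x, min e (d / 2))"]) auto
qed (rule that; force simp: disjoint_family_on_def pairwise_def disjnt_def)

text \<open>The library's \<open>measure_orthogonal_image\<close> requires a well-ordered index type.
  The Vitali covering argument below works in any Euclidean space: up to a null set, \<open>S\<close> is a
  disjoint union of balls, and \<open>f\<close> maps each ball to a ball of the same radius.\<close>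
lemma emeasure_orthogonal_image_open:
  fixes f :: "'a::euclidean_space \<Rightarrow> 'a"
  assumes f: "orthogonal_transformation f" and "open S"
  shows "emeasure lebesgue (f ` S) = emeasure lebesgue S"
proof -
  define B where "B i = ball (fst i) (snd i)" for i :: "'a \<times> real"
  obtain C where C: "countable C" "\<And>i. i \<in> C \<Longrightarrow> 0 < snd i \<and> B i \<subseteq> S"
    and disj_B: "disjoint_family_on B C" and neg: "negligible (S - (\<Union>i\<in>C. B i))"
    using Vitali_covering_open_balls[OF \<open>open S\<close>] unfolding B_def[abs_def] by blast
  define N where "N = S - (\<Union>i\<in>C. B i)"
  have S_eq: "S = (\<Union>i\<in>C. B i) \<union> N"
    using C(2) by (auto simp: N_def)
  have "linear f" "inj f"
    using f by (simp_all add: orthogonal_transformation_linear orthogonal_transformation_inj)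
  have fB: "f ` B i = ball (f (fst i)) (snd i)" for i
    by (simp add: B_def image_orthogonal_transformation_ball[OF f])
  have ball_eq: "emeasure lebesgue (f ` B i) = emeasure lebesgue (B i)" if "i \<in> C" for i
    using C(2)[OF that] emeasure_lebesgue_ball_conv_unit_ball[of "snd i" "f (fst i)"]
      emeasure_lebesgue_ball_conv_unit_ball[of "snd i" "fst i"]
    unfolding fB by (auto simp: B_def)
  have disj_fB: "disjoint_family_on (\<lambda>i. f ` B i) C"
    using disj_B \<open>inj f\<close> by (auto simp: disjoint_family_on_def simp flip: image_Int)
  have "emeasure lebesgue (\<Union>i\<in>C. f ` B i) = (\<integral>\<^sup>+i. emeasure lebesgue (f ` B i) \<partial>count_space C)"
    using C(1) disj_fB by (intro emeasure_UN_countable) (auto simp: fB)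
  also have "\<dots> = (\<integral>\<^sup>+i. emeasure lebesgue (B i) \<partial>count_space C)"
    using ball_eq by (intro nn_integral_cong) simp
  also have "\<dots> = emeasure lebesgue (\<Union>i\<in>C. B i)"
    using C(1) disj_B emeasure_UN_countable[of C B lebesgue] by (simp add: B_def)
  finally have UN_eq: "emeasure lebesgue (\<Union>i\<in>C. f ` B i) = emeasure lebesgue (\<Union>i\<in>C. B i)" .
  have "negligible (f ` N)"
    using neg \<open>linear f\<close> unfolding N_def
    by (intro negligible_differentiable_image_negligible linear_imp_differentiable_on) auto
  moreover have "f ` S = (\<Union>i\<in>C. f ` B i) \<union> f ` N"
    using S_eq by blast
  ultimately have "emeasure lebesgue (f ` S) = emeasure lebesgue (\<Union>i\<in>C. f ` B i)"
    by (simp add: emeasure_Un_null_set negligible_iff_null_sets sets_lebesgue_open fB open_UN)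
  also have "\<dots> = emeasure lebesgue ((\<Union>i\<in>C. B i) \<union> N)"
    using neg unfolding UN_eq N_def
    by (intro emeasure_Un_null_set[symmetric]) (simp_all add: negligible_iff_null_sets sets_lebesgue_open B_def open_UN)
  also have "\<dots> = emeasure lebesgue S"
    using S_eq by simp
  finally show ?thesis .
qed

lemma measure_orthogonal_image_cbox:
  fixes f :: "'a::euclidean_space \<Rightarrow> 'a"
  assumes f: "orthogonal_transformation f"
  shows "measure lebesgue (f ` cbox a b) = measure lebesgue (cbox a b)"
proof -
  have "linear f" "surj f"
    using f by (simp_all add: orthogonal_transformation_linear orthogonal_transformation_surj)
  have null: "f ` (cbox a b - box a b) \<in> null_sets lebesgue" "cbox a b - box a b \<in> null_sets lebesgue"
    using \<open>linear f\<close> negligible_frontier_interval[of a b]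
    by (auto simp flip: negligible_iff_null_sets
        intro!: negligible_differentiable_image_negligible linear_imp_differentiable_on)
  have "open (f ` box a b)"
    using \<open>linear f\<close> \<open>surj f\<close> by (intro open_surjective_linear_image open_box)
  moreover have "f ` cbox a b = f ` box a b \<union> f ` (cbox a b - box a b)"
    using box_subset_cbox[of a b] by blast
  ultimately have "measure lebesgue (f ` cbox a b) = measure lebesgue (f ` box a b)"
    using measure_Un_null_set[OF sets_lebesgue_open null(1)] by simp
  also have "\<dots> = measure lebesgue (box a b)"
    unfolding measure_def by (subst emeasure_orthogonal_image_open[OF f]) (simp_all add: open_box)
  also have "\<dots> = measure lebesgue (box a b \<union> (cbox a b - box a b))"
    using measure_Un_null_set[OF sets_lebesgue_open[OF open_box] null(2)] by (rule sym)
  also have "box a b \<union> (cbox a b - box a b) = cbox a b"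
    using box_subset_cbox[of a b] by blast
  finally show ?thesis .
qed

lemma measure_orthogonal_transformation_image:
  fixes f :: "'a::euclidean_space \<Rightarrow> 'a"
  assumes f: "orthogonal_transformation f" and "S \<in> lmeasurable"
  shows "f ` S \<in> lmeasurable" and "measure lebesgue (f ` S) = measure lebesgue S"
  using measure_linear_sufficient[of f S 1] assms measure_orthogonal_image_cbox[OF f]
  by (simp_all add: orthogonal_transformation_linear)

lemma emeasure_lborel_orthogonal_vimage:
  fixes R :: "real^'n^'n"
  assumes R: "orthogonal_matrix R" and K: "K \<in> sets borel" "bounded K"
  shows "emeasure lborel ((*v) R -` K) = emeasure lborel K"
proof -
  have "(*v) R -` K = (*v) (transpose R) ` K"
    by (rule orthogonal_matrix_vimage_eq_image[OF R])
  moreover have "K \<in> lmeasurable"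
    using K by (intro bounded_set_imp_lmeasurable) (simp_all add: sets_completionI_sets)
  ultimately have lmeas: "(*v) R -` K \<in> lmeasurable"
    and eq: "measure lebesgue ((*v) R -` K) = measure lebesgue K"
    using measure_orthogonal_transformation_image[of "(*v) (transpose R)" K] R
    by (simp_all add: orthogonal_transformation_matrix_vector_mult_iff)
  have "(*v) R -` K \<in> sets borel"
    using K by (intro continuous_vimage_borel continuous_intros)
  then have "emeasure lborel ((*v) R -` K) = emeasure lebesgue ((*v) R -` K)"
    by simp
  also have "\<dots> = emeasure lebesgue K"
    using lmeas \<open>K \<in> lmeasurable\<close> eq by (simp add: emeasure_eq_measure2)
  also have "\<dots> = emeasure lborel K"
    using K by simp
  finally show ?thesis .
qed

subsection \<open>The cone of small \<open>M\<close>-norm inside the unit ball\<close>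

text \<open>For positive definite \<open>M\<close> and \<open>\<delta> > 0\<close> this is the cone
  \<open>{y. \<parallel>y\<parallel>\<^sub>M \<le> \<delta> |y|}\<close>, written without square roots.\<close>
definition quadratic_cone :: "real^'n^'n \<Rightarrow> real \<Rightarrow> (real^'n) set" where
  "quadratic_cone M \<delta> = {y. y \<bullet> (M *v y) \<le> \<delta>\<^sup>2 * (y \<bullet> y)}"

lemma closed_quadratic_cone: "closed (quadratic_cone M \<delta>)"
  unfolding quadratic_cone_def by (intro closed_Collect_le continuous_intros)

lemma scaleR_mem_quadratic_cone:
  assumes "c \<noteq> 0"
  shows "c *\<^sub>R y \<in> quadratic_cone M \<delta> \<longleftrightarrow> y \<in> quadratic_cone M \<delta>"
proof -
  have "c *\<^sub>R y \<in> quadratic_cone M \<delta> \<longleftrightarrow> c\<^sup>2 * (y \<bullet> (M *v y)) \<le> c\<^sup>2 * (\<delta>\<^sup>2 * (y \<bullet> y))"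
    by (simp add: quadratic_cone_def matrix_vector_mult_scaleR power2_eq_square algebra_simps)
  also have "\<dots> \<longleftrightarrow> y \<in> quadratic_cone M \<delta>"
    using assms by (simp add: quadratic_cone_def)
  finally show ?thesis .
qed

lemma M_norm_le_iff_mem_quadratic_cone:
  assumes "\<delta> \<ge> 0" and "norm y = 1"
  shows "M_norm M y \<le> \<delta> \<longleftrightarrow> y \<in> quadratic_cone M \<delta>"
proof -
  have "M_norm M y \<le> \<delta> \<longleftrightarrow> sqrt (y \<bullet> (M *v y)) \<le> sqrt (\<delta>\<^sup>2)"
    using assms(1) by (simp add: M_norm_def)
  also have "\<dots> \<longleftrightarrow> y \<in> quadratic_cone M \<delta>"
    using assms(2) unfolding real_sqrt_le_iff by (simp add: quadratic_cone_def norm_eq_1)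
  finally show ?thesis .
qed

lemma sqrt_prod:
  "(\<And>i. i \<in> A \<Longrightarrow> g i \<ge> 0) \<Longrightarrow> (\<Prod>i\<in>A. sqrt (g i)) = sqrt (\<Prod>i\<in>A. g i)"
  by (induction A rule: infinite_finite_induct) (auto simp: real_sqrt_mult)

lemma prod_min_one_div_sqrt_le:
  fixes lam :: "'a \<Rightarrow> real"
  assumes A: "finite A" "j \<in> A" and pos: "\<And>i. i \<in> A \<Longrightarrow> lam i > 0"
    and prod: "prod lam A = 1" and "\<delta> \<ge> 0"
  shows "(\<Prod>i\<in>A. min 1 (\<delta> / sqrt (lam i))) \<le> \<delta> ^ (card A - 1) * sqrt (lam j)"
proof -
  have "(\<Prod>i\<in>A. min 1 (\<delta> / sqrt (lam i)))
        = min 1 (\<delta> / sqrt (lam j)) * (\<Prod>i\<in>A - {j}. min 1 (\<delta> / sqrt (lam i)))"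
    using A by (simp add: prod.remove)
  also have "\<dots> \<le> 1 * (\<Prod>i\<in>A - {j}. \<delta> / sqrt (lam i))"
    using \<open>\<delta> \<ge> 0\<close> pos by (intro mult_mono prod_mono) (auto intro!: prod_nonneg simp: less_imp_le)
  also have "\<dots> = \<delta> ^ (card A - 1) / (\<Prod>i\<in>A - {j}. sqrt (lam i))"
    using A by (simp add: prod_dividef card_Diff_singleton)
  also have "(\<Prod>i\<in>A - {j}. sqrt (lam i)) = 1 / sqrt (lam j)"
  proof -
    have "sqrt (lam j) * (\<Prod>i\<in>A - {j}. sqrt (lam i)) = sqrt (prod lam A)"
      using A pos sqrt_prod[of A lam] prod.remove[OF A, of "\<lambda>i. sqrt (lam i)"] by (simp add: less_imp_le)
    then show ?thesis
      using pos[OF \<open>j \<in> A\<close>] prod by (simp add: field_simps)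
  qed
  finally show ?thesis
    by simp
qed

lemma ball_inter_quadratic_cone_subset_box:
  fixes M P :: "real^'n^'n"
  assumes P: "orthogonal_matrix P"
    and quad: "\<And>w. (P *v w) \<bullet> (M *v (P *v w)) = (\<Sum>i\<in>UNIV. lam i * (w $ i)\<^sup>2)"
    and pos: "\<And>i. lam i > 0" and "\<delta> > 0"
  defines "b \<equiv> \<chi> i. min 1 (\<delta> / sqrt (lam i))"
  shows "ball 0 1 \<inter> quadratic_cone M \<delta> \<subseteq> (*v) P ` cbox (- b) b"
proof
  fix y
  assume y: "y \<in> ball 0 1 \<inter> quadratic_cone M \<delta>"
  define w where "w = transpose P *v y"
  have Pw: "P *v w = y"
    unfolding w_def using orthogonal_matrix_vector_mult_transpose(1)[OF P] .
  have "norm w < 1"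
    using y orthogonal_matrix_norm[OF P, of w] by (simp add: Pw)
  then have "w \<bullet> w \<le> 1"
    by (simp add: power2_norm_eq_inner[symmetric] power_le_one)
  then have sum_le: "(\<Sum>i\<in>UNIV. lam i * (w $ i)\<^sup>2) \<le> \<delta>\<^sup>2"
    using y quad[of w] orthogonal_matrix_inner[OF P, of w w]
    by (simp add: Pw quadratic_cone_def) (smt (verit) mult_left_le zero_le_power2)
  have "\<bar>w $ i\<bar> \<le> b $ i" for i
  proof -
    have "lam i * (w $ i)\<^sup>2 \<le> \<delta>\<^sup>2"
      using sum_le member_le_sum[of i UNIV "\<lambda>i. lam i * (w $ i)\<^sup>2"] pos by (simp add: less_imp_le)
    then have "(w $ i)\<^sup>2 \<le> (\<delta> / sqrt (lam i))\<^sup>2"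
      using pos[of i] by (simp add: power_divide field_simps)
    then have "\<bar>w $ i\<bar> \<le> \<delta> / sqrt (lam i)"
      using power2_le_imp_le[of "\<bar>w $ i\<bar>" "\<delta> / sqrt (lam i)"] \<open>\<delta> > 0\<close> pos[of i] by simp
    moreover have "\<bar>w $ i\<bar> \<le> 1"
      using component_le_norm_cart[of w i] \<open>norm w < 1\<close> by simp
    ultimately show ?thesis
      by (simp add: b_def)
  qed
  then have "w \<in> cbox (- b) b"
    by (simp add: mem_box_cart abs_le_iff minus_le_iff)
  then show "y \<in> (*v) P ` cbox (- b) b"
    using Pw by blast
qed

lemma measure_orthogonal_image_symmetric_box:
  fixes P :: "real^'n^'n"
  assumes P: "orthogonal_matrix P" and b: "\<And>i. b $ i \<ge> 0"
  shows "measure lborel ((*v) P ` cbox (- b) b) = 2 ^ CARD('n) * (\<Prod>i\<in>UNIV. b $ i)"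
proof -
  have "compact ((*v) P ` cbox (- b) b)"
    by (intro compact_continuous_image continuous_intros compact_cbox)
  then have "measure lborel ((*v) P ` cbox (- b) b) = measure lebesgue (cbox (- b) b)"
    using measure_orthogonal_transformation_image[of "(*v) P" "cbox (- b) b"] P
      measure_completion[of "(*v) P ` cbox (- b) b" lborel]
    by (simp add: orthogonal_transformation_matrix_vector_mult_iff compact_imp_closed borel_closed)
  also have "\<dots> = measure lborel (cbox (- b) b)"
    by simp
  also have "\<dots> = (\<Prod>i\<in>UNIV. b $ i - (- b) $ i)"
    using b by (intro content_cbox_cart) (simp add: interval_ne_empty_cart)
  also have "\<dots> = 2 ^ CARD('n) * (\<Prod>i\<in>UNIV. b $ i)"
    by (simp add: prod.distrib)
  finally show ?thesis .
qed

lemma measure_ball_inter_quadratic_cone_le: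
  fixes M :: "real^'n^'n"
  assumes M: "pos_def_sym M" "det M = 1" and "\<delta> > 0"
  shows "measure lborel (ball 0 1 \<inter> quadratic_cone M \<delta>) \<le> 2 ^ CARD('n) * \<delta> ^ (CARD('n) - 1) * nu1 M"
proof -
  obtain P lam where P: "orthogonal_matrix P" and eig: "\<And>k. M *v column k P = lam k *\<^sub>R column k P"
    using symmetric_matrix_orthogonal_eigenbasis M(1) unfolding pos_def_sym_def by blast
  have pos: "lam k > 0" for k
    using pos_def_sym_eigenvalue_pos[OF M(1) orthogonal_matrix_column_nonzero[OF P] eig] .
  have "Min (range lam) \<in> range lam"
    by (rule Min_in) auto
  then obtain j where j: "lam j = Min (range lam)"
    by (metis imageE)
  define b where "b = (\<chi> i. min 1 (\<delta> / sqrt (lam i)))"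
  have "measure lborel (ball 0 1 \<inter> quadratic_cone M \<delta>) \<le> measure lborel ((*v) P ` cbox (- b) b)"
  proof (rule measure_mono_fmeasurable)
    show "ball 0 1 \<inter> quadratic_cone M \<delta> \<subseteq> (*v) P ` cbox (- b) b"
      unfolding b_def
      by (rule ball_inter_quadratic_cone_subset_box[OF P eigenbasis_quadratic_form[OF P eig] pos \<open>\<delta> > 0\<close>])
    show "ball 0 1 \<inter> quadratic_cone M \<delta> \<in> sets lborel"
      by (simp add: borel_closed closed_quadratic_cone)
    show "(*v) P ` cbox (- b) b \<in> fmeasurable lborel"
      by (intro fmeasurable_compact compact_continuous_image continuous_intros compact_cbox)
  qed
  also have "\<dots> = 2 ^ CARD('n) * (\<Prod>i\<in>UNIV. b $ i)"
    using \<open>\<delta> > 0\<close> pos by (intro measure_orthogonal_image_symmetric_box[OF P]) (simp add: b_def less_imp_le)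
  also have "(\<Prod>i\<in>UNIV. b $ i) \<le> \<delta> ^ (CARD('n) - 1) * sqrt (lam j)"
    using prod_min_one_div_sqrt_le[of UNIV j lam \<delta>] pos eigenbasis_det[OF P eig] M(2) \<open>\<delta> > 0\<close>
    by (simp add: b_def)
  finally show ?thesis
    by (simp add: eigenbasis_nu1[OF P eig] j mult.assoc)
qed

subsection \<open>Haar measure on the orthogonal group\<close>

lemma haar_orthogonalD:
  assumes "haar_orthogonal \<mu>"
  shows "prob_space \<mu>" "sets \<mu> = sets borel" "space \<mu> = UNIV" "AE R in \<mu>. orthogonal_matrix R"
  using assms sets_eq_imp_space_eq[of \<mu> borel] by (auto simp: haar_orthogonal_def)

lemma haar_orthogonal_emeasure_left_mult:
  fixes \<mu> :: "(real^'n^'n) measure"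
  assumes H: "haar_orthogonal \<mu>" and Q: "orthogonal_matrix Q" and A: "A \<in> sets borel"
  shows "emeasure \<mu> ((\<lambda>R. Q ** R) -` A) = emeasure \<mu> A"
proof -
  have "continuous_on UNIV (\<lambda>R::real^'n^'n. Q ** R)"
    by (intro continuous_intros)
  then have "(\<lambda>R. Q ** R) \<in> measurable \<mu> borel"
    unfolding measurable_cong_sets[OF haar_orthogonalD(2)[OF H] refl]
    by (rule borel_measurable_continuous_onI)
  then have "emeasure (distr \<mu> borel (\<lambda>R. Q ** R)) A = emeasure \<mu> ((\<lambda>R. Q ** R) -` A)"
    using A haar_orthogonalD(3)[OF H] by (simp add: emeasure_distr)
  moreover have "distr \<mu> borel (\<lambda>R. Q ** R) = \<mu>"
    using H Q by (simp add: haar_orthogonal_def)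
  ultimately show ?thesis
    by simp
qed

text \<open>Fubini on \<open>\<mu> \<Otimes> \<mu>\<close> for the set \<open>{(R, S). S\<^sup>T R \<in> A}\<close>:
  left invariance evaluates both iterated integrals.\<close>
lemma haar_orthogonal_emeasure_transpose:
  fixes \<mu> :: "(real^'n^'n) measure"
  assumes H: "haar_orthogonal \<mu>" and A: "A \<in> sets borel"
  shows "emeasure \<mu> (transpose -` A) = emeasure \<mu> A"
proof -
  interpret P: prob_space \<mu>
    using haar_orthogonalD(1)[OF H] .
  interpret PP: pair_sigma_finite \<mu> \<mu>
    by (simp add: pair_sigma_finite_def P.sigma_finite_measure_axioms)
  have sets: "sets \<mu> = sets borel" and space: "space \<mu> = UNIV" and orth: "AE R in \<mu>. orthogonal_matrix R"
    using haar_orthogonalD[OF H] by auto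
  have tA: "transpose -` A \<in> sets borel"
    using A by (intro continuous_vimage_borel continuous_intros)
  define T where "T = (\<lambda>(R, S :: real^'n^'n). transpose S ** R) -` A"
  have T: "T \<in> sets (\<mu> \<Otimes>\<^sub>M \<mu>)"
    unfolding T_def sets_pair_measure_cong[OF sets sets] borel_prod case_prod_unfold
    using A by (intro continuous_vimage_borel continuous_intros)
  have "(\<integral>\<^sup>+R. emeasure \<mu> (Pair R -` T) \<partial>\<mu>) = emeasure (\<mu> \<Otimes>\<^sub>M \<mu>) T"
    by (rule P.emeasure_pair_measure_alt[OF T, symmetric])
  also have "\<dots> = (\<integral>\<^sup>+S. emeasure \<mu> ((\<lambda>R. (R, S)) -` T) \<partial>\<mu>)"
    by (rule PP.emeasure_pair_measure_alt2[OF T])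
  also have "(\<integral>\<^sup>+S. emeasure \<mu> ((\<lambda>R. (R, S)) -` T) \<partial>\<mu>) = (\<integral>\<^sup>+S. emeasure \<mu> A \<partial>\<mu>)"
    using orth
  proof (intro nn_integral_cong_AE, eventually_elim)
    case (elim S)
    have "(\<lambda>R. (R, S)) -` T = (\<lambda>R. transpose S ** R) -` A"
      by (auto simp: T_def)
    then show ?case
      using haar_orthogonal_emeasure_left_mult[OF H _ A, of "transpose S"] elim by simp
  qed
  also have "(\<integral>\<^sup>+R. emeasure \<mu> (Pair R -` T) \<partial>\<mu>) = (\<integral>\<^sup>+R. emeasure \<mu> (transpose -` A) \<partial>\<mu>)"
    using orth
  proof (intro nn_integral_cong_AE, eventually_elim)
    case (elim R)
    have "Pair R -` T = (\<lambda>S. transpose R ** S) -` (transpose -` A)"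
      by (auto simp: T_def matrix_transpose_mul)
    then show ?case
      using haar_orthogonal_emeasure_left_mult[OF H _ tA, of "transpose R"] elim by simp
  qed
  finally show ?thesis
    using P.emeasure_space_1 by (simp add: space)
qed

lemma haar_orthogonal_emeasure_right_mult:
  fixes \<mu> :: "(real^'n^'n) measure"
  assumes H: "haar_orthogonal \<mu>" and Q: "orthogonal_matrix Q" and A: "A \<in> sets borel"
  shows "emeasure \<mu> ((\<lambda>R. R ** Q) -` A) = emeasure \<mu> A"
proof -
  have tA: "transpose -` A \<in> sets borel"
    using A by (intro continuous_vimage_borel continuous_intros)
  have B: "(\<lambda>S. transpose Q ** S) -` (transpose -` A) \<in> sets borel"
    by (rule continuous_vimage_borel[OF _ tA]) (intro continuous_intros)
  have "(\<lambda>R. R ** Q) -` A = transpose -` ((\<lambda>S. transpose Q ** S) -` (transpose -` A))"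
    by (auto simp: matrix_transpose_mul)
  then have "emeasure \<mu> ((\<lambda>R. R ** Q) -` A) = emeasure \<mu> ((\<lambda>S. transpose Q ** S) -` (transpose -` A))"
    by (simp only: haar_orthogonal_emeasure_transpose[OF H B])
  also have "\<dots> = emeasure \<mu> (transpose -` A)"
    using Q by (intro haar_orthogonal_emeasure_left_mult[OF H _ tA]) simp
  also have "\<dots> = emeasure \<mu> A"
    by (rule haar_orthogonal_emeasure_transpose[OF H A])
  finally show ?thesis .
qed

lemma haar_orthogonal_emeasure_column_event:
  fixes \<mu> :: "(real^'n^'n) measure"
  assumes H: "haar_orthogonal \<mu>" and C: "C \<in> sets borel" and "norm u = 1" "norm w = 1"
  shows "emeasure \<mu> {R. R *v w \<in> C} = emeasure \<mu> {R. R *v u \<in> C}"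
proof -
  obtain f where f: "orthogonal_transformation f" "f u = w"
    using orthogonal_transformation_exists_1 assms(3,4) by metis
  define Q where "Q = matrix f"
  have Q: "orthogonal_matrix Q" "Q *v u = w"
    using f by (auto simp: Q_def orthogonal_transformation_matrix matrix_works)
  have eq: "{R. R *v w \<in> C} = (\<lambda>R. R ** Q) -` {R. R *v u \<in> C}"
    by (auto simp flip: matrix_vector_mul_assoc simp: Q(2))
  show ?thesis
    unfolding eq using C by (intro haar_orthogonal_emeasure_right_mult[OF H Q(1)] sets_borel_matrix_vector_mult_event)
qed

lemma haar_orthogonal_emeasure_cone_event:
  fixes \<mu> :: "(real^'n^'n) measure"
  assumes H: "haar_orthogonal \<mu>" and C: "C \<in> sets borel"
    and cone: "\<And>c y. c > 0 \<Longrightarrow> c *\<^sub>R y \<in> C \<longleftrightarrow> y \<in> C" and "norm u = 1" "y \<noteq> 0"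
  shows "emeasure \<mu> {R. R *v y \<in> C} = emeasure \<mu> {R. R *v u \<in> C}"
proof -
  have "{R. R *v y \<in> C} = {R. R *v (y /\<^sub>R norm y) \<in> C}"
    using \<open>y \<noteq> 0\<close> cone[of "inverse (norm y)"] by (simp add: matrix_vector_mult_scaleR)
  then show ?thesis
    using assms haar_orthogonal_emeasure_column_event[OF H C, of u "y /\<^sub>R norm y"] by simp
qed

text \<open>Fubini on \<open>\<mu> \<Otimes> lborel\<close> for the set \<open>{(R, y). |y| < 1 \<and> R y \<in> C}\<close>.\<close>
lemma haar_orthogonal_emeasure_cone:
  fixes \<mu> :: "(real^'n^'n) measure" and C :: "(real^'n) set"
  assumes H: "haar_orthogonal \<mu>" and C: "C \<in> sets borel"
    and cone: "\<And>c y. c > 0 \<Longrightarrow> c *\<^sub>R y \<in> C \<longleftrightarrow> y \<in> C" and u: "norm u = 1"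
  shows "emeasure \<mu> {R. R *v u \<in> C} * emeasure lborel (ball (0::real^'n) 1) = emeasure lborel (ball 0 1 \<inter> C)"
proof -
  interpret P: prob_space \<mu>
    using haar_orthogonalD(1)[OF H] .
  interpret PL: pair_sigma_finite \<mu> lborel
    by (simp add: pair_sigma_finite_def P.sigma_finite_measure_axioms lborel.sigma_finite_measure_axioms)
  define X where "X = {p :: (real^'n^'n) \<times> (real^'n). snd p \<in> ball 0 1 \<and> fst p *v snd p \<in> C}"
  have "X = snd -` ball 0 1 \<inter> (\<lambda>p. fst p *v snd p) -` C"
    by (auto simp: X_def)
  then have X: "X \<in> sets (\<mu> \<Otimes>\<^sub>M lborel)"
    unfolding sets_pair_measure_cong[OF haar_orthogonalD(2)[OF H] sets_lborel] borel_prod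
    by (simp only:) (intro sets.Int continuous_vimage_borel[OF _ C]
        continuous_vimage_borel[OF _ borel_open[OF open_ball]] continuous_intros)
  have "emeasure lborel (ball 0 1 \<inter> C) = (\<integral>\<^sup>+R. emeasure lborel (ball 0 1 \<inter> C) \<partial>\<mu>)"
    using P.emeasure_space_1 by (simp add: haar_orthogonalD(3)[OF H])
  also have "\<dots> = (\<integral>\<^sup>+R. emeasure lborel (Pair R -` X) \<partial>\<mu>)"
    using haar_orthogonalD(4)[OF H]
  proof (intro nn_integral_cong_AE, eventually_elim)
    case (elim R)
    then have "Pair R -` X = (*v) R -` (ball 0 1 \<inter> C)"
      by (auto simp: X_def orthogonal_matrix_norm)
    then show ?case
      using emeasure_lborel_orthogonal_vimage[OF \<open>orthogonal_matrix R\<close>, of "ball 0 1 \<inter> C"] C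
      by (simp add: bounded_Int)
  qed
  also have "\<dots> = (\<integral>\<^sup>+y. emeasure \<mu> ((\<lambda>R. (R, y)) -` X) \<partial>lborel)"
    by (simp add: lborel.emeasure_pair_measure_alt[OF X, symmetric] PL.emeasure_pair_measure_alt2[OF X])
  also have "\<dots> = (\<integral>\<^sup>+y. emeasure \<mu> {R. R *v u \<in> C} * indicator (ball (0::real^'n) 1) y \<partial>lborel)"
    using AE_lborel_singleton[of "0::real^'n"]
  proof (intro nn_integral_cong_AE, eventually_elim)
    case (elim y)
    then show ?case
      using haar_orthogonal_emeasure_cone_event[OF H C cone u \<open>y \<noteq> 0\<close>]
      by (cases "y \<in> ball 0 1") (auto simp: X_def)
  qed
  also have "\<dots> = emeasure \<mu> {R. R *v u \<in> C} * emeasure lborel (ball (0::real^'n) 1)"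
    by (simp add: nn_integral_cmult_indicator)
  finally show ?thesis ..
qed

lemma haar_orthogonal_measure_cone:
  fixes \<mu> :: "(real^'n^'n) measure" and C :: "(real^'n) set"
  assumes "haar_orthogonal \<mu>" "C \<in> sets borel"
    and "\<And>c y. c > 0 \<Longrightarrow> c *\<^sub>R y \<in> C \<longleftrightarrow> y \<in> C" and "norm u = 1"
  shows "measure \<mu> {R. R *v u \<in> C} * omega TYPE('n) = measure lborel (ball 0 1 \<inter> C)"
  using haar_orthogonal_emeasure_cone[OF assms] unfolding omega_def measure_def by (metis enn2real_mult)

lemma haar_orthogonal_measure_M_norm_le:
  fixes \<mu> :: "(real^'n^'n) measure"
  assumes H: "haar_orthogonal \<mu>" and "norm u = 1" and "\<delta> \<ge> 0"
  shows "measure \<mu> {R. M_norm M (R *v u) \<le> \<delta>} = measure \<mu> {R. R *v u \<in> quadratic_cone M \<delta>}"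
proof (rule measure_eq_AE)
  show "AE R in \<mu>. R \<in> {R. M_norm M (R *v u) \<le> \<delta>} \<longleftrightarrow> R \<in> {R. R *v u \<in> quadratic_cone M \<delta>}"
    using haar_orthogonalD(4)[OF H]
    by eventually_elim (use assms(2,3) in \<open>simp add: orthogonal_matrix_norm M_norm_le_iff_mem_quadratic_cone\<close>)
  have "closed {R::real^'n^'n. M_norm M (R *v u) \<le> \<delta>}"
    unfolding M_norm_def by (intro closed_Collect_le continuous_intros)
  moreover have "{R. R *v u \<in> quadratic_cone M \<delta>} \<in> sets borel"
    by (intro sets_borel_matrix_vector_mult_event borel_closed closed_quadratic_cone)
  ultimately show "{R. M_norm M (R *v u) \<le> \<delta>} \<in> sets \<mu>" "{R. R *v u \<in> quadratic_cone M \<delta>} \<in> sets \<mu>"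
    by (simp_all add: haar_orthogonalD(2)[OF H] borel_closed)
qed

theorem lemma2p1:
  fixes M :: "real^'n^'n" and u :: "real^'n" and \<delta> :: real
    and \<mu> :: "(real^'n^'n) measure"
  assumes "pos_def_sym M" and "det M = 1"
    and "haar_orthogonal \<mu>"
    and "norm u = 1" and "\<delta> > 0"
  shows "measure \<mu> {R. M_norm M (R *v u) \<le> \<delta>}
         \<le> (2 ^ CARD('n) / omega TYPE('n)) * \<delta> ^ (CARD('n) - 1) * nu1 M"
proof -
  have omega_pos: "omega TYPE('n) > 0"
    using content_ball_pos[of 1 "0::real^'n"] by (simp add: omega_def)
  have "measure \<mu> {R. M_norm M (R *v u) \<le> \<delta>} = measure \<mu> {R. R *v u \<in> quadratic_cone M \<delta>}"
    using assms(3,4,5) by (simp add: haar_orthogonal_measure_M_norm_le)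
  also have "\<dots> = measure lborel (ball 0 1 \<inter> quadratic_cone M \<delta>) / omega TYPE('n)"
    using haar_orthogonal_measure_cone[OF assms(3) _ _ assms(4), of "quadratic_cone M \<delta>"] omega_pos
    by (simp add: borel_closed closed_quadratic_cone scaleR_mem_quadratic_cone field_simps)
  also have "\<dots> \<le> (2 ^ CARD('n) * \<delta> ^ (CARD('n) - 1) * nu1 M) / omega TYPE('n)"
    using measure_ball_inter_quadratic_cone_le[OF assms(1,2,5)] omega_pos by (simp add: divide_right_mono)
  finally show ?thesis
    by simp
qed

end
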